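(* Assume the target tube $\mathscr{T}_N$ is closed, $\mathcal{U}$ is compact, and each $f_k$ is continuous on $\mathcal{X}\times\mathcal{U}$. Let $\alpha\in[0,1]$, $k\in\mathbb{N}_{[0,N-1]}$, and let $\mathcal{E}_1,\dots,\mathcal{E}_M\subseteq\mathcal{W}$ be bounded measurable sets such that $\mathbb{P}\big((w_k,\dots,w_{N-1})\in\mathcal{E}_i^{N-k}\big)=\alpha$ for every $i\in\mathbb{N}_{[1,M]}$. Then $$\bigcup_{m=1}^M\mathcal{R}_k(\mathscr{T}_N,\mathcal{E}_m)\subseteq\mathcal{L}_k(\alpha).$$
   Context: Fix $N\in\mathbb{N}$, $N>0$, and write $\mathbb{N}_{[a,b]}=\{a,a+1,\dots,b\}$. Consider the discrete-time system $x_{k+1}=f_k(x_k,u_k)+w_k$, $k=0,\dots,N-1$, with state $x_k\in\mathcal{X}\subseteq\mathbb{R}^n$, input $u_k\in\mathcal{U}\subseteq\mathbb{R}^m$, disturbance $w_k\in\mathcal{W}\subseteq\mathbb{R}^n$ with $0\in\mathcal{W}$, and $f_k:\mathcal{X}\times\mathcal{U}\to\mathcal{X}$. A target tube is a sequence $\mathscr{T}_N=[\mathcal{T}_0,\dots,\mathcal{T}_N]$ of subsets of $\mathcal{X}$; it is called closed (resp. convex) if every $\mathcal{T}_k$ is closed (resp. convex). In the stochastic setting, $w_0,\dots,w_{N-1}$ are i.i.d. random vectors with an absolutely continuous distribution $\mathbb{P}_w$ on $\mathcal{W}$. A Markov policy is a tuple $\pi=[\mu_0,\dots,\mu_{N-1}]$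 of universally measurable maps $\mu_k:\mathcal{X}\to\mathcal{U}$; $\mathcal{M}$ denotes the set of Markov policies. For $\pi\in\mathcal{M}$ and $x_k=y$, $\mathbb{P}^\pi_k(\cdot\,|\,y)$ denotes the probability law of $(x_{k+1},\dots,x_N)$ generated by $x_{t+1}=f_t(x_t,\mu_t(x_t))+w_t$. The stochastic $\alpha$-level reach set is $\mathcal{L}_k(\alpha)=\{y\in\mathcal{T}_k:\sup_{\pi\in\mathcal{M}}\mathbb{P}^\pi_k(\bigcap_{t=k+1}^N\{x_t\in\mathcal{T}_t\}\,|\,y)\ge\alpha\}$. For $\mathcal{E}\subseteq\mathcal{W}$ and $k\in\mathbb{N}_{[0,N-1]}$, the disturbance minimal reach set $\mathcal{R}_k(\mathscr{T}_N,\mathcal{E})$ is the set of $x_k\in\mathcal{T}_k$ for which there exist state-feedback laws $\nu_t:\mathcal{X}\to\mathcal{U}$, $t\in\mathbb{N}_{[k,N-1]}$ (no measurability required), such that for every disturbance sequence $w_k,\dots,w_{N-1}\in\mathcal{E}$ the trajectory $x_{t+1}=f_t(x_t,\nu_t(x_t))+w_t$ satisfies $x_t\in\mathcal{T}_t$ for all $t\in\mathbb{N}_{[k+1,N]}$; also $\mathcal{R}_N(\mathscr{T}_N,\mathcal{E})=\mathcal{T}_N$. *)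

theory Defs
  imports "HOL-Probability.Probability"
begin

definition univ_measurable_set :: "'a::topological_space set \<Rightarrow> bool" where
  "univ_measurable_set A \<longleftrightarrow>
     (\<forall>M::'a measure. prob_space M \<and> sets M = sets borel \<longrightarrow> A \<in> sets (completion M))"

definition univ_measurable :: "('a::topological_space \<Rightarrow> 'b::topological_space) \<Rightarrow> bool" where
  "univ_measurable g \<longleftrightarrow> (\<forall>B \<in> sets borel. univ_measurable_set (g -` B))"

(* closed-loop trajectory started at time k in state y: traj f mu k y w j = x_{k+j},
   with x_{t+1} = f_t(x_t, mu_t(x_t)) + w_t *)
fun traj :: "(nat \<Rightarrow> 'x::real_vector \<Rightarrow> 'u \<Rightarrow> 'x) \<Rightarrow> (nat \<Rightarrow> 'x \<Rightarrow> 'u)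
              \<Rightarrow> nat \<Rightarrow> 'x \<Rightarrow> (nat \<Rightarrow> 'x) \<Rightarrow> nat \<Rightarrow> 'x" where
  "traj f mu k y w 0 = y"
| "traj f mu k y w (Suc j) =
     f (k + j) (traj f mu k y w j) (mu (k + j) (traj f mu k y w j)) + w (k + j)"

definition markov_policies :: "'x::euclidean_space set \<Rightarrow> 'u::euclidean_space set \<Rightarrow> nat
                                 \<Rightarrow> (nat \<Rightarrow> 'x \<Rightarrow> 'u) set" where
  "markov_policies X U N =
     {mu. \<forall>t < N. univ_measurable (mu t) \<and> (\<forall>x \<in> X. mu t x \<in> U)}"

definition dist_seq :: "'x::euclidean_space measure \<Rightarrow> nat \<Rightarrow> nat \<Rightarrow> (nat \<Rightarrow> 'x) measure" where
  "dist_seq Pw k N = PiM {k..<N} (\<lambda>_. Pw)"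

definition reach_prob :: "'x::euclidean_space measure \<Rightarrow> (nat \<Rightarrow> 'x \<Rightarrow> 'u \<Rightarrow> 'x)
     \<Rightarrow> nat \<Rightarrow> (nat \<Rightarrow> 'x set) \<Rightarrow> (nat \<Rightarrow> 'x \<Rightarrow> 'u) \<Rightarrow> nat \<Rightarrow> 'x \<Rightarrow> real" where
  "reach_prob Pw f N T mu k y =
     measure (completion (dist_seq Pw k N))
       {w \<in> space (dist_seq Pw k N). \<forall>j \<in> {1..N - k}. traj f mu k y w j \<in> T (k + j)}"

definition level_reach_set :: "'x::euclidean_space set \<Rightarrow> 'u::euclidean_space set \<Rightarrow> 'x measure
     \<Rightarrow> (nat \<Rightarrow> 'x \<Rightarrow> 'u \<Rightarrow> 'x) \<Rightarrow> nat \<Rightarrow> (nat \<Rightarrow> 'x set) \<Rightarrow> nat \<Rightarrow> real \<Rightarrow> 'x set" where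
  "level_reach_set X U Pw f N T k \<alpha> =
     {y \<in> T k. (SUP mu \<in> markov_policies X U N. reach_prob Pw f N T mu k y) \<ge> \<alpha>}"

(* disturbance minimal reach set R_k(T_N, E) (feedback laws need not be measurable) *)
definition min_reach_set :: "'x::euclidean_space set \<Rightarrow> 'u::euclidean_space set
     \<Rightarrow> (nat \<Rightarrow> 'x \<Rightarrow> 'u \<Rightarrow> 'x) \<Rightarrow> nat \<Rightarrow> (nat \<Rightarrow> 'x set) \<Rightarrow> 'x set \<Rightarrow> nat \<Rightarrow> 'x set" where
  "min_reach_set X U f N T E k =
     (if k = N then T N else
      {y \<in> T k. \<exists>nu :: nat \<Rightarrow> 'x \<Rightarrow> 'u.
          (\<forall>t \<in> {k..<N}. \<forall>x \<in> X. nu t x \<in> U) \<and>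
          (\<forall>w :: nat \<Rightarrow> 'x. (\<forall>t \<in> {k..<N}. w t \<in> E) \<longrightarrow>
              (\<forall>j \<in> {1..N - k}. traj f nu k y w j \<in> T (k + j)))})"

end

theory Submission
  imports Defs
begin

text \<open>A point of \<open>R\<^sub>k(T\<^sub>N, E)\<close> lies in the robust backward-reachable set obtained from the
  recursion \<open>R\<^sub>N = T\<^sub>N\<close>, \<open>R\<^sub>t = T\<^sub>t \<inter> {x. \<exists>u\<in>U. \<forall>e\<in>E. f\<^sub>t(x, u) + e \<in> R\<^sub>t\<^sub>+\<^sub>1}\<close>.
  Closedness of the tube, compactness of \<open>U\<close> and continuity of \<open>f\<^sub>t\<close> make every \<open>R\<^sub>t\<close> and the
  graph of admissible inputs closed, so a Borel measurable selection from that graph is a Markov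
  policy keeping the state in \<open>R\<^sub>t\<close> for every disturbance in \<open>E\<close>. Under this policy the reach
  event contains the box \<open>E\<^sup>N\<^sup>-\<^sup>k\<close>, whose probability is \<open>\<alpha>\<close>.\<close>

text \<open>Measurable selection in the style of Kuratowski and Ryll-Nardzewski: \<open>nest n x\<close> cuts the
  fibre of \<open>x\<close> down to the first ball of radius \<open>2\<^sup>-\<^sup>n\<close> (centred in the dense sequence \<open>d\<close>) that
  meets it, and the nested sets shrink to a point depending measurably on \<open>x\<close>.\<close>

locale closed_graph_selection =
  fixes Gr :: "('u::euclidean_space \<times> 'x::euclidean_space) set"
    and U :: "'u set" and d :: "nat \<Rightarrow> 'u" and u0 :: 'u
  assumes closed_Gr: "closed Gr"
    and compact_U: "compact U"
    and Gr_subset: "Gr \<subseteq> U \<times> UNIV"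
    and u0_in_U: "u0 \<in> U"
    and dense_d: "\<And>V. open V \<Longrightarrow> V \<noteq> {} \<Longrightarrow> \<exists>i. d i \<in> V"
begin

definition cell :: "nat \<Rightarrow> nat \<Rightarrow> 'u set" where
  "cell n i = cball (d i) ((1/2)^n)"

primrec nest :: "nat \<Rightarrow> 'x \<Rightarrow> 'u set" where
  "nest 0 x = {u. (u, x) \<in> Gr}"
| "nest (Suc n) x = nest n x \<inter> cell n (LEAST i. nest n x \<inter> cell n i \<noteq> {})"

definition hits :: "nat \<Rightarrow> 'u set \<Rightarrow> 'x set" where
  "hits n C = {x. nest n x \<inter> C \<noteq> {}}"

definition idx :: "nat \<Rightarrow> 'x \<Rightarrow> nat" where
  "idx n x = (LEAST i. x \<in> hits n (cell n i))"

lemma nest_Suc_idx: "nest (Suc n) x = nest n x \<inter> cell n (idx n x)"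
  by (simp add: idx_def hits_def)

declare nest.simps(2)[simp del]

lemma nest_antimono: "m \<le> n \<Longrightarrow> nest n x \<subseteq> nest m x"
  by (induction n) (auto simp: le_Suc_eq nest_Suc_idx)

lemma closed_nest: "closed (nest n x)"
proof (induction n)
  case 0
  have "nest 0 x = (\<lambda>u. (u, x)) -` Gr" by auto
  also have "closed \<dots>"
    by (intro continuous_closed_vimage closed_Gr continuous_intros)
  finally show ?case .
next
  case (Suc n)
  then show ?case by (simp add: nest_Suc_idx cell_def closed_Int)
qed

lemma nest_meets_cell:
  assumes "nest n x \<noteq> {}" shows "\<exists>i. x \<in> hits n (cell n i)"
proof -
  obtain u where u: "u \<in> nest n x" using assms by blast
  have "u \<in> ball u ((1/2)^n)" by simp
  then have "ball u ((1/2)^n) \<noteq> {}" by blast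
  then obtain i where "d i \<in> ball u ((1/2)^n)" using dense_d by blast
  then have "u \<in> cell n i" by (simp add: cell_def dist_commute)
  then show ?thesis using u by (auto simp: hits_def)
qed

lemma nest_nonempty:
  assumes "x \<in> hits 0 UNIV" shows "nest n x \<noteq> {}"
proof (induction n)
  case 0 then show ?case using assms by (simp add: hits_def)
next
  case (Suc n)
  then have "x \<in> hits n (cell n (idx n x))"
    unfolding idx_def by (rule LeastI_ex[OF nest_meets_cell])
  then show ?case by (simp add: nest_Suc_idx hits_def)
qed

lemma closed_hits_0:
  assumes "closed C" shows "closed (hits 0 C)"
proof -
  have "hits 0 C = {x. \<exists>u. u \<in> U \<and> (u, x) \<in> Gr \<inter> (C \<times> UNIV)}"
    using Gr_subset by (auto simp: hits_def)
  moreover have "closed (Gr \<inter> (C \<times> UNIV))"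
    using closed_Gr assms by (simp add: closed_Int closed_Times)
  ultimately show ?thesis
    using closed_compact_projection[OF compact_U, of "Gr \<inter> (C \<times> UNIV)"] by simp
qed

lemma hits_borel: "closed C \<Longrightarrow> hits n C \<in> sets borel"
proof (induction n arbitrary: C)
  case 0 then show ?case by (simp add: borel_closed closed_hits_0)
next
  case (Suc n)
  have "idx n \<in> borel \<rightarrow>\<^sub>M count_space UNIV"
    unfolding idx_def
    by (intro measurable_Least) (simp add: Measurable.pred_def Suc.IH cell_def)
  then have "idx n -` {i} \<in> sets borel" for i
    using measurable_sets[of "idx n" borel "count_space UNIV" "{i}"] by simp
  moreover have "hits n (cell n i \<inter> C) \<in> sets borel" for i
    using Suc by (simp add: cell_def closed_Int)
  moreover have "hits (Suc n) C = (\<Union>i. idx n -` {i} \<inter> hits n (cell n i \<inter> C))"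
    by (auto simp: hits_def nest_Suc_idx)
  ultimately show ?case by auto
qed

lemma idx_measurable: "idx n \<in> borel \<rightarrow>\<^sub>M count_space UNIV"
  unfolding idx_def
  by (intro measurable_Least) (simp add: Measurable.pred_def hits_borel cell_def)

lemma nest_Inter_nonempty:
  assumes "x \<in> hits 0 UNIV" shows "\<exists>a. \<forall>n. a \<in> nest n x"
proof -
  have "\<exists>n. \<forall>u\<in>nest n x. \<forall>v\<in>nest n x. dist u v < e" if "e > 0" for e
  proof -
    have "\<exists>n. (1/2::real)^n < e/2" by (rule real_arch_pow_inv) (use that in auto)
    then obtain n where n: "(1/2::real)^n < e/2" by blast
    have "dist u v < e" if "u \<in> nest (Suc n) x" "v \<in> nest (Suc n) x" for u v
      using that n dist_triangle2[of u v "d (idx n x)"]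
      by (auto simp: nest_Suc_idx cell_def dist_commute)
    then show ?thesis by blast
  qed
  then obtain a where "\<And>n. a \<in> nest n x"
    using decreasing_closed_nest[of "\<lambda>n. nest n x"] closed_nest nest_nonempty[OF assms] nest_antimono
    by metis
  then show ?thesis by blast
qed

definition sel :: "'x \<Rightarrow> 'u" where
  "sel x = (if x \<in> hits 0 UNIV then SOME a. \<forall>n. a \<in> nest n x else u0)"

lemma sel_in_nest: "x \<in> hits 0 UNIV \<Longrightarrow> sel x \<in> nest n x"
  using someI_ex[OF nest_Inter_nonempty] by (simp add: sel_def)

lemma sel_in_U: "sel x \<in> U"
  using sel_in_nest[of x 0] Gr_subset u0_in_U by (auto simp: sel_def)

lemma sel_in_graph: "(\<exists>u. (u, x) \<in> Gr) \<Longrightarrow> (sel x, x) \<in> Gr"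
  using sel_in_nest[of x 0] by (auto simp: hits_def)

lemma sel_measurable: "sel \<in> borel_measurable borel"
proof -
  let ?D = "hits 0 UNIV"
  have lim: "(\<lambda>n. d (idx n x)) \<longlonglongrightarrow> sel x" if "x \<in> ?D" for x
  proof (rule tendsto_dist_iff[THEN iffD2], rule Lim_null_comparison)
    have "sel x \<in> cell n (idx n x)" for n
      using sel_in_nest[OF that, of "Suc n"] by (simp add: nest_Suc_idx)
    then show "\<forall>\<^sub>F n in sequentially. norm (dist (d (idx n x)) (sel x)) \<le> (1/2)^n"
      by (simp add: cell_def)
  qed (rule LIMSEQ_power_zero, simp)
  have approx: "(\<lambda>x. d (idx n x)) \<in> borel_measurable (restrict_space borel {x. x \<in> ?D})" for n
    by (rule measurable_restrict_space1, rule measurable_compose_countable[OF _ idx_measurable]) simp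
  have "sel \<in> borel_measurable (restrict_space borel {x. x \<in> ?D})"
    by (rule borel_measurable_LIMSEQ_metric[OF approx lim]) (simp add: space_restrict_space)
  then have "(\<lambda>x. SOME a. \<forall>n. a \<in> nest n x) \<in> borel_measurable (restrict_space borel {x. x \<in> ?D})"
    by (rule measurable_cong[THEN iffD1, rotated]) (simp add: sel_def space_restrict_space)
  moreover have "{x \<in> space borel. x \<in> ?D} \<in> sets borel" by (simp add: hits_borel)
  ultimately show ?thesis
    unfolding sel_def by (subst measurable_If_restrict_space_iff) simp_all
qed

end

lemma borel_measurable_selection:
  fixes Gr :: "('u::euclidean_space \<times> 'x::euclidean_space) set"
  assumes "closed Gr" "compact U" "Gr \<subseteq> U \<times> UNIV" "U \<noteq> {}"
  obtains g where "g \<in> borel_measurable borel" "\<And>x. g x \<in> U"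
    "\<And>x. (\<exists>u. (u, x) \<in> Gr) \<Longrightarrow> (g x, x) \<in> Gr"
proof -
  obtain D :: "'u set" where D: "countable D" "\<And>V. open V \<Longrightarrow> V \<noteq> {} \<Longrightarrow> \<exists>c\<in>D. c \<in> V"
    using countable_dense_exists by blast
  then have "D \<noteq> {}" by blast
  then have "\<exists>i. from_nat_into D i \<in> V" if "open V" "V \<noteq> {}" for V
    using D that by (metis from_nat_into_surj)
  moreover obtain u0 where "u0 \<in> U" using assms(4) by blast
  ultimately interpret closed_graph_selection Gr U "from_nat_into D" u0
    using assms by unfold_locales auto
  show ?thesis using that sel_measurable sel_in_U sel_in_graph by blast
qed

definition robust_pre :: "'u set \<Rightarrow> ('x::real_vector \<Rightarrow> 'u \<Rightarrow> 'x) \<Rightarrow> 'x set \<Rightarrow> 'x set \<Rightarrow> 'x set" where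
  "robust_pre U g E S = {x. \<exists>u\<in>U. \<forall>e\<in>E. g x u + e \<in> S}"

definition robust_graph :: "'x set \<Rightarrow> 'u set \<Rightarrow> ('x::real_vector \<Rightarrow> 'u \<Rightarrow> 'x) \<Rightarrow> 'x set
    \<Rightarrow> 'x set \<Rightarrow> ('u \<times> 'x) set" where
  "robust_graph A U g E S = {(u, x). x \<in> A \<and> u \<in> U \<and> (\<forall>e\<in>E. g x u + e \<in> S)}"

lemma closed_robust_graph:
  fixes g :: "'x::euclidean_space \<Rightarrow> 'u::euclidean_space \<Rightarrow> 'x"
  assumes "closed A" "compact U" "continuous_on (A \<times> U) (\<lambda>(x, u). g x u)" "closed S"
  shows "closed (robust_graph A U g E S)"
proof -
  let ?C = "U \<times> A"
  have "closed ?C" using assms(1,2) by (simp add: closed_Times compact_imp_closed)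
  moreover have "continuous_on ?C (\<lambda>p. g (snd p) (fst p) + e)" for e
  proof -
    have "continuous_on ?C (\<lambda>p. (\<lambda>(x, u). g x u) (snd p, fst p))"
      by (rule continuous_on_compose2[OF assms(3)]) (auto intro!: continuous_intros)
    then show ?thesis by (intro continuous_intros) simp
  qed
  ultimately have "closed (?C \<inter> (\<Inter>e\<in>E. ?C \<inter> (\<lambda>p. g (snd p) (fst p) + e) -` S))"
    using assms(4) by (intro closed_Int closed_INT ballI continuous_closed_preimage) auto
  moreover have "robust_graph A U g E S = ?C \<inter> (\<Inter>e\<in>E. ?C \<inter> (\<lambda>p. g (snd p) (fst p) + e) -` S)"
    by (auto simp: robust_graph_def)
  ultimately show ?thesis by simp
qed

lemma closed_robust_pre:
  fixes g :: "'x::euclidean_space \<Rightarrow> 'u::euclidean_space \<Rightarrow> 'x"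
  assumes "closed A" "compact U" "continuous_on (A \<times> U) (\<lambda>(x, u). g x u)" "closed S"
  shows "closed (A \<inter> robust_pre U g E S)"
proof -
  have "A \<inter> robust_pre U g E S = {x. \<exists>u. u \<in> U \<and> (u, x) \<in> robust_graph A U g E S}"
    by (auto simp: robust_pre_def robust_graph_def)
  then show ?thesis
    using closed_compact_projection[OF assms(2) closed_robust_graph[OF assms]] by simp
qed

lemma robust_pre_feedback:
  fixes g :: "'x::euclidean_space \<Rightarrow> 'u::euclidean_space \<Rightarrow> 'x"
  assumes "closed A" "compact U" "continuous_on (A \<times> U) (\<lambda>(x, u). g x u)" "closed S"
    and "U \<noteq> {}"
  obtains h where "h \<in> borel_measurable borel" "\<And>x. h x \<in> U"
    "\<And>x e. x \<in> A \<inter> robust_pre U g E S \<Longrightarrow> e \<in> E \<Longrightarrow> g x (h x) + e \<in> S"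
proof -
  have "robust_graph A U g E S \<subseteq> U \<times> UNIV" by (auto simp: robust_graph_def)
  then obtain h where "h \<in> borel_measurable borel" "\<And>x. h x \<in> U"
    and h: "\<And>x. (\<exists>u. (u, x) \<in> robust_graph A U g E S) \<Longrightarrow> (h x, x) \<in> robust_graph A U g E S"
    using borel_measurable_selection[OF closed_robust_graph[OF assms(1-4)] assms(2) _ assms(5)]
    by blast
  moreover have "g x (h x) + e \<in> S" if "x \<in> A \<inter> robust_pre U g E S" "e \<in> E" for x e
    using h[of x] that by (auto simp: robust_pre_def robust_graph_def)
  ultimately show ?thesis using that by blast
qed

function robust_reach :: "'u set \<Rightarrow> (nat \<Rightarrow> 'x::real_vector \<Rightarrow> 'u \<Rightarrow> 'x) \<Rightarrow> nat
    \<Rightarrow> (nat \<Rightarrow> 'x set) \<Rightarrow> 'x set \<Rightarrow> nat \<Rightarrow> 'x set" where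
  "robust_reach U f N T E t =
     (if t < N then T t \<inter> robust_pre U (f t) E (robust_reach U f N T E (Suc t)) else T t)"
  by auto
termination by (relation "Wellfounded.measure (\<lambda>(U, f, N, T, E, t). N - t)") auto

declare robust_reach.simps[simp del]

lemma robust_reach_final: "robust_reach U f N T E N = T N"
  by (simp add: robust_reach.simps)

lemma robust_reach_step:
  "t < N \<Longrightarrow> robust_reach U f N T E t = T t \<inter> robust_pre U (f t) E (robust_reach U f N T E (Suc t))"
  by (simp add: robust_reach.simps)

lemma robust_reach_subset: "robust_reach U f N T E t \<subseteq> T t"
  by (cases "t < N") (auto simp: robust_reach.simps)

lemma closed_robust_reach:
  fixes f :: "nat \<Rightarrow> 'x::euclidean_space \<Rightarrow> 'u::euclidean_space \<Rightarrow> 'x"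
  assumes "compact U" "\<And>t. t < N \<Longrightarrow> continuous_on (T t \<times> U) (\<lambda>(x, u). f t x u)"
    and "\<And>t. t \<le> N \<Longrightarrow> closed (T t)" and "t \<le> N"
  shows "closed (robust_reach U f N T E t)"
  using assms(4)
proof (induction t rule: inc_induct)
  case base then show ?case using assms(3) by (simp add: robust_reach_final)
next
  case (step t)
  then show ?case
    using closed_robust_pre[OF assms(3) assms(1) assms(2)] by (simp add: robust_reach_step)
qed

lemma robust_reach_feedback:
  fixes f :: "nat \<Rightarrow> 'x::euclidean_space \<Rightarrow> 'u::euclidean_space \<Rightarrow> 'x"
  assumes "compact U" "\<And>t. t < N \<Longrightarrow> continuous_on (T t \<times> U) (\<lambda>(x, u). f t x u)"
    and "\<And>t. t \<le> N \<Longrightarrow> closed (T t)" and "U \<noteq> {}"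
  obtains mu where "\<And>t. mu t \<in> borel_measurable borel" "\<And>t x. mu t x \<in> U"
    "\<And>t x e. t < N \<Longrightarrow> x \<in> robust_reach U f N T E t \<Longrightarrow> e \<in> E \<Longrightarrow>
       f t x (mu t x) + e \<in> robust_reach U f N T E (Suc t)"
proof -
  have "\<exists>h. h \<in> borel_measurable borel \<and> (\<forall>x. h x \<in> U) \<and>
      (t < N \<longrightarrow> (\<forall>x e. x \<in> robust_reach U f N T E t \<longrightarrow> e \<in> E \<longrightarrow>
         f t x (h x) + e \<in> robust_reach U f N T E (Suc t)))" for t
  proof (cases "t < N")
    case True
    obtain h where "h \<in> borel_measurable borel" "\<And>x. h x \<in> U"
      "\<And>x e. x \<in> T t \<inter> robust_pre U (f t) E (robust_reach U f N T E (Suc t)) \<Longrightarrow> e \<in> E \<Longrightarrow>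
         f t x (h x) + e \<in> robust_reach U f N T E (Suc t)"
      by (rule robust_pre_feedback[OF assms(3) assms(1) assms(2) closed_robust_reach[OF assms(1-3), where t="Suc t" and E=E]
            assms(4)]) (use True in auto)
    then show ?thesis using True by (auto simp: robust_reach_step)
  next
    case False
    obtain u where "u \<in> U" using assms(4) by blast
    then show ?thesis using False by (intro exI[of _ "\<lambda>_. u"]) auto
  qed
  then show ?thesis using that by metis
qed

lemma traj_cong_prefix:
  "(\<And>t. t < k + j \<Longrightarrow> w t = w' t) \<Longrightarrow> traj f mu k y w j = traj f mu k y w' j"
  by (induction j) auto

lemma traj_in_invariant_tube:
  assumes "y \<in> R k"
    and "\<And>t x. k \<le> t \<Longrightarrow> t < N \<Longrightarrow> x \<in> R t \<Longrightarrow> f t x (mu t x) + w t \<in> R (Suc t)"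
    and "j \<le> N - k"
  shows "traj f mu k y w j \<in> R (k + j)"
  using assms(3) by (induction j) (auto simp: assms(1) intro!: assms(2))

lemma traj_in_robust_reach:
  assumes "k < N" "j \<le> N - k" "\<And>t. t \<le> N \<Longrightarrow> T t \<subseteq> X"
    and "y \<in> T k" "\<forall>t\<in>{k..<N}. \<forall>x\<in>X. nu t x \<in> U"
    and safe: "\<forall>w. (\<forall>t\<in>{k..<N}. w t \<in> E) \<longrightarrow> (\<forall>j\<in>{1..N - k}. traj f nu k y w j \<in> T (k + j))"
    and "\<forall>t\<in>{k..<N}. w t \<in> E"
  shows "traj f nu k y w j \<in> robust_reach U f N T E (k + j)"
proof -
  let ?R = "robust_reach U f N T E"
  have "\<forall>w. (\<forall>t\<in>{k..<N}. w t \<in> E) \<longrightarrow> traj f nu k y w j \<in> ?R (k + j)"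
    using assms(2)
  proof (induction j rule: inc_induct)
    case base
    have "N - k \<in> {1..N - k}" using assms(1) by simp
    show ?case
    proof (intro allI impI)
      fix w assume "\<forall>t\<in>{k..<N}. w t \<in> E"
      then have "traj f nu k y w (N - k) \<in> T (k + (N - k))"
        using safe \<open>N - k \<in> {1..N - k}\<close> by blast
      then show "traj f nu k y w (N - k) \<in> ?R (k + (N - k))"
        using assms(1) by (simp add: robust_reach_final)
    qed
  next
    case (step j)
    show ?case
    proof (intro allI impI)
      fix w assume w: "\<forall>t\<in>{k..<N}. w t \<in> E"
      let ?x = "traj f nu k y w j"
      have xT: "?x \<in> T (k + j)"
      proof (cases "j = 0")
        case False
        then have "j \<in> {1..N - k}" using step.hyps by auto
        then show ?thesis using safe w by blast
      qed (simp add: assms(4))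
      have t: "k + j \<in> {k..<N}" using step.hyps by auto
      then have "nu (k + j) ?x \<in> U" using xT assms(3)[of "k + j"] assms(5) by auto
      moreover have "f (k + j) ?x (nu (k + j) ?x) + e \<in> ?R (Suc (k + j))" if "e \<in> E" for e
      proof -
        \<comment> \<open>Redirecting the disturbance at time \<open>k + j\<close> to \<open>e\<close> leaves the first \<open>j\<close> steps
          unchanged, so the induction hypothesis covers every successor of \<open>?x\<close>.\<close>
        let ?w' = "w(k + j := e)"
        have "traj f nu k y ?w' j = ?x" by (rule traj_cong_prefix) simp
        then have "traj f nu k y ?w' (Suc j) = f (k + j) ?x (nu (k + j) ?x) + e" by simp
        moreover have "\<forall>t\<in>{k..<N}. ?w' t \<in> E" using w that by auto
        then have "traj f nu k y ?w' (Suc j) \<in> ?R (k + Suc j)" using step.IH by blast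
        ultimately show ?thesis by (metis add_Suc_right)
      qed
      ultimately show "?x \<in> ?R (k + j)"
        using xT step.hyps by (auto simp: robust_reach_step robust_pre_def)
    qed
  qed
  then show ?thesis using assms(7) by blast
qed

lemma min_reach_subset_robust_reach:
  assumes "k < N" "\<And>t. t \<le> N \<Longrightarrow> T t \<subseteq> X"
  shows "min_reach_set X U f N T E k \<subseteq> robust_reach U f N T E k"
proof
  fix y assume "y \<in> min_reach_set X U f N T E k"
  then obtain nu where yT: "y \<in> T k" and nuU: "\<forall>t\<in>{k..<N}. \<forall>x\<in>X. nu t x \<in> U"
    and safe: "\<forall>w. (\<forall>t\<in>{k..<N}. w t \<in> E) \<longrightarrow> (\<forall>j\<in>{1..N - k}. traj f nu k y w j \<in> T (k + j))"
    using assms(1) by (auto simp: min_reach_set_def)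
  show "y \<in> robust_reach U f N T E k"
  proof (cases "E = {}")
    case True
    have "nu k y \<in> U" using nuU yT assms(1) assms(2)[of k] by auto
    then show ?thesis using yT True assms(1) by (auto simp: robust_reach_step robust_pre_def)
  next
    case False
    then obtain e0 where "e0 \<in> E" by blast
    then show ?thesis
      using traj_in_robust_reach[OF assms(1) _ assms(2) yT nuU safe, of 0 "\<lambda>_. e0"] by simp
  qed
qed

lemma robust_reach_invariant_safe:
  assumes "y \<in> robust_reach U f N T E k"
    and "\<And>t x e. t < N \<Longrightarrow> x \<in> robust_reach U f N T E t \<Longrightarrow> e \<in> E \<Longrightarrow>
           f t x (mu t x) + e \<in> robust_reach U f N T E (Suc t)"
    and "w \<in> PiE {k..<N} (\<lambda>_. E)"
  shows "\<forall>j\<in>{1..N - k}. traj f mu k y w j \<in> T (k + j)"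
proof
  fix j assume "j \<in> {1..N - k}"
  then have "traj f mu k y w j \<in> robust_reach U f N T E (k + j)"
    using assms(3) by (intro traj_in_invariant_tube[where R="robust_reach U f N T E", OF assms(1)] assms(2))
      (auto simp: PiE_iff)
  then show "traj f mu k y w j \<in> T (k + j)" using robust_reach_subset by blast
qed

text \<open>Outside \<open>T\<^sub>t \<times> U\<close> the dynamics need not be measurable. Setting them to \<open>0\<close> there changes
  no trajectory before it leaves the tube, hence not the reach event, but makes every trajectory
  a measurable function of the disturbance.\<close>

definition truncated_dynamics :: "(nat \<Rightarrow> 'x set) \<Rightarrow> 'u set \<Rightarrow> (nat \<Rightarrow> 'x::real_vector \<Rightarrow> 'u \<Rightarrow> 'x)
    \<Rightarrow> nat \<Rightarrow> 'x \<Rightarrow> 'u \<Rightarrow> 'x" where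
  "truncated_dynamics T U f t x u = (if x \<in> T t \<and> u \<in> U then f t x u else 0)"

lemma traj_truncated_dynamics:
  assumes "y \<in> T k" "\<And>t x. mu t x \<in> U" "\<forall>i\<in>{1..<j}. traj f mu k y w i \<in> T (k + i)"
  shows "traj (truncated_dynamics T U f) mu k y w j = traj f mu k y w j"
  using assms(3)
proof (induction j)
  case (Suc j)
  have "traj f mu k y w j \<in> T (k + j)"
    using Suc.prems assms(1) by (cases "j = 0") auto
  then show ?case using Suc assms(2) by (simp add: truncated_dynamics_def)
qed simp

lemma traj_truncated_dynamics_safe_iff:
  assumes "y \<in> T k" "\<And>t x. mu t x \<in> U"
  shows "(\<forall>j\<in>{1..n}. traj (truncated_dynamics T U f) mu k y w j \<in> T (k + j))
     \<longleftrightarrow> (\<forall>j\<in>{1..n}. traj f mu k y w j \<in> T (k + j))"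
proof (induction n)
  case (Suc n)
  have "traj (truncated_dynamics T U f) mu k y w (Suc n) = traj f mu k y w (Suc n)"
    if "\<forall>j\<in>{1..n}. traj f mu k y w j \<in> T (k + j)"
    using that assms by (intro traj_truncated_dynamics) auto
  then show ?case using Suc by (auto simp: atLeastAtMostSuc_conv)
qed simp

lemma borel_measurable_truncated_dynamics:
  fixes f :: "nat \<Rightarrow> 'x::euclidean_space \<Rightarrow> 'u::euclidean_space \<Rightarrow> 'x"
  assumes "closed (T t)" "closed U" "continuous_on (T t \<times> U) (\<lambda>(x, u). f t x u)"
    and "mu \<in> borel_measurable borel"
  shows "(\<lambda>x. truncated_dynamics T U f t x (mu x)) \<in> borel_measurable borel"
proof -
  let ?h = "\<lambda>p. if p \<in> T t \<times> U then f t (fst p) (snd p) else 0"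
  have "continuous_on (T t \<times> U) (\<lambda>p. f t (fst p) (snd p))"
    using assms(3) by (simp add: case_prod_beta')
  then have "?h \<in> borel_measurable borel"
    using assms(1,2)
    by (intro borel_measurable_continuous_on_if[OF _ _ continuous_on_const] borel_closed closed_Times)
  moreover have "(\<lambda>x. (x, mu x)) \<in> borel_measurable borel"
    using measurable_Pair[OF measurable_ident_sets[OF refl] assms(4)] by (simp add: borel_prod)
  ultimately have "(\<lambda>x. ?h (x, mu x)) \<in> borel_measurable borel"
    by (rule measurable_compose[rotated])
  then show ?thesis by (simp only: truncated_dynamics_def fst_conv snd_conv mem_Times_iff)
qed

lemma measurable_traj:
  assumes "sets Pw = sets borel"
    and "\<And>t. t \<in> {k..<N} \<Longrightarrow> (\<lambda>x. f t x (mu t x)) \<in> borel_measurable borel"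
    and "j \<le> N - k"
  shows "(\<lambda>w. traj f mu k y w j) \<in> borel_measurable (dist_seq Pw k N)"
  using assms(3)
proof (induction j)
  case (Suc j)
  then have t: "k + j \<in> {k..<N}" by simp
  have "(\<lambda>w. w (k + j)) \<in> borel_measurable (dist_seq Pw k N)"
    using measurable_component_singleton[OF t, of "\<lambda>_. Pw"]
    by (simp add: dist_seq_def measurable_cong_sets[OF refl assms(1)])
  moreover have "(\<lambda>w. f (k + j) (traj f mu k y w j) (mu (k + j) (traj f mu k y w j)))
      \<in> borel_measurable (dist_seq Pw k N)"
    using measurable_compose[OF Suc.IH assms(2)[OF t]] Suc.prems by simp
  ultimately show ?case by simp
qed simp

lemma reach_event_measurable:
  fixes f :: "nat \<Rightarrow> 'x::euclidean_space \<Rightarrow> 'u::euclidean_space \<Rightarrow> 'x"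
  assumes "sets Pw = sets borel" "compact U"
    and "\<And>t. t < N \<Longrightarrow> continuous_on (T t \<times> U) (\<lambda>(x, u). f t x u)"
    and "\<And>t. t \<le> N \<Longrightarrow> closed (T t)"
    and "\<And>t. mu t \<in> borel_measurable borel" "\<And>t x. mu t x \<in> U" "y \<in> T k"
  shows "{w \<in> space (dist_seq Pw k N). \<forall>j\<in>{1..N - k}. traj f mu k y w j \<in> T (k + j)}
           \<in> sets (dist_seq Pw k N)"
proof -
  let ?g = "truncated_dynamics T U f" and ?D = "dist_seq Pw k N"
  have "(\<lambda>x. ?g t x (mu t x)) \<in> borel_measurable borel" if "t \<in> {k..<N}" for t
    using that by (intro borel_measurable_truncated_dynamics assms(3,4,5) compact_imp_closed[OF assms(2)])
      auto
  then have traj: "(\<lambda>w. traj ?g mu k y w j) \<in> borel_measurable ?D" if "j \<le> N - k" for j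
    using that by (rule measurable_traj[OF assms(1)])
  have "{w \<in> space ?D. traj ?g mu k y w j \<in> T (k + j)} \<in> sets ?D" if "j \<in> {1..N - k}" for j
    using that assms(4)[of "k + j"] by (intro measurable_sets_Collect[OF traj]) (auto intro: borel_closed)
  then have "{w \<in> space ?D. \<forall>j\<in>{1..N - k}. traj ?g mu k y w j \<in> T (k + j)} \<in> sets ?D"
    by (intro sets.sets_Collect_finite_All) auto
  then show ?thesis
    by (simp only: traj_truncated_dynamics_safe_iff[where T=T and k=k and mu=mu, OF assms(7,6)])
qed

lemma prob_space_dist_seq: "prob_space Pw \<Longrightarrow> prob_space (dist_seq Pw k N)"
  unfolding dist_seq_def by (intro prob_space_PiM) simp

lemma measure_le_reach_prob:
  assumes "prob_space Pw"
    and "{w \<in> space (dist_seq Pw k N). \<forall>j\<in>{1..N - k}. traj f mu k y w j \<in> T (k + j)}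
           \<in> sets (dist_seq Pw k N)"
    and "B \<subseteq> space (dist_seq Pw k N)"
    and "\<And>w. w \<in> B \<Longrightarrow> \<forall>j\<in>{1..N - k}. traj f mu k y w j \<in> T (k + j)"
  shows "measure (dist_seq Pw k N) B \<le> reach_prob Pw f N T mu k y"
proof -
  interpret prob_space "dist_seq Pw k N"
    using assms(1) by (rule prob_space_dist_seq)
  show ?thesis
    using finite_measure_mono[OF _ assms(2)] assms(2-4) by (auto simp: reach_prob_def)
qed

lemma borel_measurable_imp_univ_measurable:
  "g \<in> borel_measurable borel \<Longrightarrow> univ_measurable g"
  unfolding univ_measurable_def univ_measurable_set_def
  using measurable_sets[of g borel borel] by (auto simp: sets_eq_imp_space_eq)

lemma level_reach_setI:
  assumes "prob_space Pw" "y \<in> T k" "mu \<in> markov_policies X U N"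
    and "\<alpha> \<le> reach_prob Pw f N T mu k y"
  shows "y \<in> level_reach_set X U Pw f N T k \<alpha>"
proof -
  interpret prob_space "completion (dist_seq Pw k N)"
    using prob_space_dist_seq[OF assms(1)] by (rule prob_space.prob_space_completion)
  have "bdd_above ((\<lambda>mu. reach_prob Pw f N T mu k y) ` markov_policies X U N)"
    by (rule bdd_aboveI2[where M=1]) (simp add: reach_prob_def prob_le_1)
  from cSUP_upper2[where f="\<lambda>mu. reach_prob Pw f N T mu k y", OF this assms(3,4)] show ?thesis
    using assms(2) by (simp add: level_reach_set_def)
qed

theorem theorem7:
  fixes X W :: "'x::euclidean_space set"
    and U :: "'u::euclidean_space set"
    and f :: "nat \<Rightarrow> 'x \<Rightarrow> 'u \<Rightarrow> 'x"
    and N k M :: nat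
    and T :: "nat \<Rightarrow> 'x set"
    and Pw :: "'x measure"
    and E :: "nat \<Rightarrow> 'x set"
    and \<alpha> :: real
  assumes N_pos: "N > 0"
    and f_maps: "\<And>t x u. t < N \<Longrightarrow> x \<in> X \<Longrightarrow> u \<in> U \<Longrightarrow> f t x u \<in> X"
    and f_cont: "\<And>t. t < N \<Longrightarrow> continuous_on (X \<times> U) (\<lambda>(x, u). f t x u)"
    and U_compact: "compact U"
    and T_sub: "\<And>t. t \<le> N \<Longrightarrow> T t \<subseteq> X"
    and T_closed: "\<And>t. t \<le> N \<Longrightarrow> closed (T t)"
    and W_zero: "0 \<in> W"
    and Pw_prob: "prob_space Pw"
    and Pw_sets: "sets Pw = sets borel"
    and Pw_ac: "absolutely_continuous lborel Pw"
    and Pw_W: "AE w in Pw. w \<in> W"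
    and \<alpha>_range: "0 \<le> \<alpha>" "\<alpha> \<le> 1"
    and k_range: "k < N"
    and E_sub: "\<And>i. i \<in> {1..M} \<Longrightarrow> E i \<subseteq> W"
    and E_bounded: "\<And>i. i \<in> {1..M} \<Longrightarrow> bounded (E i)"
    and E_meas: "\<And>i. i \<in> {1..M} \<Longrightarrow> E i \<in> sets borel"
    and E_prob: "\<And>i. i \<in> {1..M} \<Longrightarrow>
                   measure (dist_seq Pw k N) (PiE {k..<N} (\<lambda>_. E i)) = \<alpha>"
  shows "(\<Union>m \<in> {1..M}. min_reach_set X U f N T (E m) k)
           \<subseteq> level_reach_set X U Pw f N T k \<alpha>"
proof
  fix y assume "y \<in> (\<Union>m \<in> {1..M}. min_reach_set X U f N T (E m) k)"
  then obtain m where m: "m \<in> {1..M}" and "y \<in> min_reach_set X U f N T (E m) k" by blast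
  then have y: "y \<in> robust_reach U f N T (E m) k"
    using min_reach_subset_robust_reach[where T=T and X=X, OF k_range T_sub] by blast
  then have yT: "y \<in> T k" and "U \<noteq> {}"
    using k_range by (auto simp: robust_reach_step robust_pre_def)
  have cont: "continuous_on (T t \<times> U) (\<lambda>(x, u). f t x u)" if "t < N" for t
    by (rule continuous_on_subset[OF f_cont[OF that]]) (use T_sub[OF less_imp_le[OF that]] in auto)
  obtain mu where mu_meas: "\<And>t. mu t \<in> borel_measurable borel" and mu_U: "\<And>t x. mu t x \<in> U"
    and mu_inv: "\<And>t x e. t < N \<Longrightarrow> x \<in> robust_reach U f N T (E m) t \<Longrightarrow> e \<in> E m \<Longrightarrow>
       f t x (mu t x) + e \<in> robust_reach U f N T (E m) (Suc t)"
    using robust_reach_feedback[where f=f and N=N and T=T and E="E m",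
        OF U_compact cont T_closed \<open>U \<noteq> {}\<close>] by blast
  have safe: "\<forall>j\<in>{1..N - k}. traj f mu k y w j \<in> T (k + j)"
    if "w \<in> PiE {k..<N} (\<lambda>_. E m)" for w
    using robust_reach_invariant_safe[OF y mu_inv that] .
  have "PiE {k..<N} (\<lambda>_. E m) \<subseteq> space (dist_seq Pw k N)"
    by (auto simp: dist_seq_def space_PiM sets_eq_imp_space_eq[OF Pw_sets] PiE_iff)
  from measure_le_reach_prob[OF Pw_prob reach_event_measurable[where f=f and N=N and T=T,
          OF Pw_sets U_compact cont T_closed mu_meas mu_U yT] this safe]
  have "\<alpha> \<le> reach_prob Pw f N T mu k y" using E_prob[OF m] by simp
  moreover have "mu \<in> markov_policies X U N"
    using mu_meas mu_U by (simp add: markov_policies_def borel_measurable_imp_univ_measurable)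
  ultimately show "y \<in> level_reach_set X U Pw f N T k \<alpha>"
    using level_reach_setI[where T=T and k=k, OF Pw_prob yT] by blast
qed

end
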